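(* Let $\kappa_i,\theta_i,\sigma_i>0$ and $\varepsilon_i\ge0$ for $i=1,2$, and let $\gamma\in[-\sqrt{\varepsilon_1\varepsilon_2},\sqrt{\varepsilon_1\varepsilon_2}]$. Set $\beta_i=\varepsilon_i/\sigma_i^2$, $\alpha_i=\gamma/\sigma_i^2$, $\nu_i=2\kappa_i\theta_i/\sigma_i^2$. Define on $\mathbb R_+^2$ the drift $$A_1(x)=\kappa_1(1+\beta_1x_2)(\theta_1-x_1)+\kappa_2\alpha_2x_1(\theta_2-x_2),\quad A_2(x)=\kappa_2(1+\beta_2x_1)(\theta_2-x_2)+\kappa_1\alpha_1x_2(\theta_1-x_1),$$ the diffusion matrix $$S(x)=\begin{pmatrix}\sigma_1^2x_1+\varepsilon_1x_1x_2 & \gamma x_1x_2\\ \gamma x_1x_2 & \sigma_2^2x_2+\varepsilon_2x_1x_2\end{pmatrix},$$ and the probability density $\pi(x)=\pi_{\nu_1}(x_1)\pi_{\nu_2}(x_2)$, where $\pi_{\nu_i}(y)=\frac{(\nu_i/\theta_i)^{\nu_i}}{\Gamma(\nu_i)}y^{\nu_i-1}e^{-\nu_iy/\theta_i}$. Then the generator $Lf=A_1\partial_{x_1}f+A_2\partial_{x_2}f+\frac12\big[S_{11}\partial_{x_1x_1}f+2S_{12}\partial_{x_1x_2}f+S_{22}\partial_{x_2x_2}f\big]$ of the diffusion $dX=A(X)\,dt+B(X)\,dw$ (with $BB^T=S$ and $w$ a two-dimensional standard Wiener process) satisfies, for every smooth $f$ on the open quadrant $(0,\infty)^2$, $$Lf(x)=\frac{1}{2\pi(x)}\nabla\cdot\big(\pi(x)S(x)\nabla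 f(x)\big);$$ that is, the process is reversible with respect to the product of the two Gamma distributions $\pi_{\nu_1,\nu_2}$.
   Context: This is the "asymptotically decoupling correlated" (ADC) two-factor model; when $\varepsilon_1=\varepsilon_2=\gamma=0$ it reduces to two independent CIR processes. *)

theory Defs
  imports "HOL-Analysis.Analysis"
begin

definition pd1 :: "(real \<Rightarrow> real \<Rightarrow> real) \<Rightarrow> real \<Rightarrow> real \<Rightarrow> real" where
  "pd1 f = (\<lambda>x1 x2. deriv (\<lambda>t. f t x2) x1)"

definition pd2 :: "(real \<Rightarrow> real \<Rightarrow> real) \<Rightarrow> real \<Rightarrow> real \<Rightarrow> real" where
  "pd2 f = (\<lambda>x1 x2. deriv (\<lambda>t. f x1 t) x2)"

text \<open>Iterated partial derivative: False means d/dx1, True means d/dx2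
  (the head of the list is applied last).\<close>
fun iter_pd :: "bool list \<Rightarrow> (real \<Rightarrow> real \<Rightarrow> real) \<Rightarrow> real \<Rightarrow> real \<Rightarrow> real" where
  "iter_pd [] f = f"
| "iter_pd (b # bs) f = (if b then pd2 (iter_pd bs f) else pd1 (iter_pd bs f))"

definition open_quadrant :: "(real \<times> real) set" where
  "open_quadrant = {0<..} \<times> {0<..}"

definition smooth_on_quadrant :: "(real \<Rightarrow> real \<Rightarrow> real) \<Rightarrow> bool" where
  "smooth_on_quadrant f \<longleftrightarrow>
     (\<forall>ds. continuous_on open_quadrant (\<lambda>(x1, x2). iter_pd ds f x1 x2) \<and>
       (\<forall>x1 x2. x1 > 0 \<longrightarrow> x2 > 0 \<longrightarrow>
          (\<lambda>t. iter_pd ds f t x2) differentiable (at x1) \<and>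
          (\<lambda>t. iter_pd ds f x1 t) differentiable (at x2)))"

text \<open>Gamma density with shape nu and mean theta (rate nu/theta).\<close>
definition gamma_density :: "real \<Rightarrow> real \<Rightarrow> real \<Rightarrow> real" where
  "gamma_density \<nu> \<theta> y = (\<nu> / \<theta>) powr \<nu> / Gamma \<nu> * y powr (\<nu> - 1) * exp (- \<nu> * y / \<theta>)"

end

theory Submission
  imports Defs
begin

text \<open>The drift is in divergence form with respect to \<open>\<pi>\<close>:
  \<open>2 \<pi> A\<^sub>i = \<partial>\<^sub>1(\<pi> S\<^sub>i\<^sub>1) + \<partial>\<^sub>2(\<pi> S\<^sub>i\<^sub>2)\<close>.
  Given this, the product rule and the symmetry of mixed partial derivatives turn
  \<open>\<nabla>\<cdot>(\<pi> S \<nabla>f)\<close> into \<open>\<pi> tr(S \<nabla>\<^sup>2f) + 2 \<pi> A\<cdot>\<nabla>f = 2 \<pi> Lf\<close>.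
  For the product of Gamma densities \<open>\<partial>\<^sub>j log \<pi> = (\<nu>\<^sub>j - 1)/x\<^sub>j - \<nu>\<^sub>j/\<theta>\<^sub>j\<close>,
  and the choice \<open>\<nu>\<^sub>i = 2\<kappa>\<^sub>i\<theta>\<^sub>i/\<sigma>\<^sub>i\<^sup>2\<close> is exactly what makes the divergence form hold.
  The bounds on \<open>\<gamma>\<close> and \<open>\<epsilon>\<^sub>i \<ge> 0\<close> only make \<open>S\<close> positive semidefinite, so that the
  diffusion coefficient \<open>B\<close> exists; the identity itself does not use them.\<close>

lemma smooth_on_quadrant_has_pd1:
  assumes "smooth_on_quadrant f" "a > 0" "b > 0"
  shows "((\<lambda>t. iter_pd ds f t b) has_real_derivative iter_pd (False # ds) f a b) (at a)"
proof -
  have "(\<lambda>t. iter_pd ds f t b) differentiable (at a)"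
    using assms unfolding smooth_on_quadrant_def by blast
  then show ?thesis by (simp add: DERIV_deriv_iff_real_differentiable pd1_def)
qed

lemma smooth_on_quadrant_has_pd2:
  assumes "smooth_on_quadrant f" "a > 0" "b > 0"
  shows "((\<lambda>t. iter_pd ds f a t) has_real_derivative iter_pd (True # ds) f a b) (at b)"
proof -
  have "(\<lambda>t. iter_pd ds f a t) differentiable (at b)"
    using assms unfolding smooth_on_quadrant_def by blast
  then show ?thesis by (simp add: DERIV_deriv_iff_real_differentiable pd2_def)
qed

lemma smooth_on_quadrant_isCont:
  assumes "smooth_on_quadrant f" "a > 0" "b > 0"
  shows "isCont (\<lambda>(x1, x2). iter_pd ds f x1 x2) (a, b)"
proof -
  have "open open_quadrant" "(a, b) \<in> open_quadrant"
    using assms(2,3) by (auto simp: open_quadrant_def intro: open_Times)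
  with assms(1) show ?thesis
    unfolding smooth_on_quadrant_def by (metis continuous_on_eq_continuous_at)
qed

definition second_difference :: "(real \<Rightarrow> real \<Rightarrow> real) \<Rightarrow> real \<Rightarrow> real \<Rightarrow> real \<Rightarrow> real" where
  "second_difference f x y h = f (x + h) (y + h) - f (x + h) y - f x (y + h) + f x y"

lemma second_difference_eq_pd21:
  assumes sm: "smooth_on_quadrant f" and x: "x > 0" and y: "y > 0" and h: "h > 0"
  obtains \<xi> \<eta> where "x < \<xi>" "\<xi> < x + h" "y < \<eta>" "\<eta> < y + h"
    "second_difference f x y h = h * h * pd2 (pd1 f) \<xi> \<eta>"
proof -
  obtain \<xi> where \<xi>: "x < \<xi>" "\<xi> < x + h"
    and mvt1: "(f (x+h) (y+h) - f (x+h) y) - (f x (y+h) - f x y) = h * (pd1 f \<xi> (y+h) - pd1 f \<xi> y)"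
  proof -
    have "\<exists>z. x < z \<and> z < x + h \<and> (f (x+h) (y+h) - f (x+h) y) - (f x (y+h) - f x y)
            = ((x+h) - x) * (pd1 f z (y+h) - pd1 f z y)"
    proof (rule MVT2)
      fix t assume "x \<le> t"
      then have t: "t > 0" using x by simp
      show "((\<lambda>t. f t (y+h) - f t y) has_real_derivative pd1 f t (y+h) - pd1 f t y) (at t)"
        using smooth_on_quadrant_has_pd1[OF sm t, of _ "[]"] y h
        by (auto intro!: derivative_intros)
    qed (use h in simp)
    then show ?thesis using that by auto
  qed
  have "\<exists>z. y < z \<and> z < y + h \<and> pd1 f \<xi> (y+h) - pd1 f \<xi> y = ((y+h) - y) * pd2 (pd1 f) \<xi> z"
  proof (rule MVT2)
    fix t assume "y \<le> t"
    then have "t > 0" using y by simp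
    with smooth_on_quadrant_has_pd2[OF sm _ this, of \<xi> "[False]"] \<xi> x
    show "((\<lambda>t. pd1 f \<xi> t) has_real_derivative pd2 (pd1 f) \<xi> t) (at t)" by simp
  qed (use h in simp)
  then obtain \<eta> where "y < \<eta>" "\<eta> < y + h" "pd1 f \<xi> (y+h) - pd1 f \<xi> y = h * pd2 (pd1 f) \<xi> \<eta>"
    by auto
  with \<xi> mvt1 show ?thesis
    by (intro that[of \<xi> \<eta>]) (auto simp: second_difference_def algebra_simps)
qed

lemma second_difference_eq_pd12:
  assumes sm: "smooth_on_quadrant f" and x: "x > 0" and y: "y > 0" and h: "h > 0"
  obtains \<xi> \<eta> where "x < \<xi>" "\<xi> < x + h" "y < \<eta>" "\<eta> < y + h"
    "second_difference f x y h = h * h * pd1 (pd2 f) \<xi> \<eta>"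
proof -
  obtain \<eta> where \<eta>: "y < \<eta>" "\<eta> < y + h"
    and mvt2: "(f (x+h) (y+h) - f x (y+h)) - (f (x+h) y - f x y) = h * (pd2 f (x+h) \<eta> - pd2 f x \<eta>)"
  proof -
    have "\<exists>z. y < z \<and> z < y + h \<and> (f (x+h) (y+h) - f x (y+h)) - (f (x+h) y - f x y)
            = ((y+h) - y) * (pd2 f (x+h) z - pd2 f x z)"
    proof (rule MVT2)
      fix t assume "y \<le> t"
      then have t: "t > 0" using y by simp
      show "((\<lambda>t. f (x+h) t - f x t) has_real_derivative pd2 f (x+h) t - pd2 f x t) (at t)"
        using smooth_on_quadrant_has_pd2[OF sm _ t, of _ "[]"] x h
        by (auto intro!: derivative_intros)
    qed (use h in simp)
    then show ?thesis using that by auto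
  qed
  have "\<exists>z. x < z \<and> z < x + h \<and> pd2 f (x+h) \<eta> - pd2 f x \<eta> = ((x+h) - x) * pd1 (pd2 f) z \<eta>"
  proof (rule MVT2)
    fix t assume "x \<le> t"
    then have "t > 0" using x by simp
    with smooth_on_quadrant_has_pd1[OF sm this, of \<eta> "[True]"] \<eta> y
    show "((\<lambda>t. pd2 f t \<eta>) has_real_derivative pd1 (pd2 f) t \<eta>) (at t)" by simp
  qed (use h in simp)
  then obtain \<xi> where "x < \<xi>" "\<xi> < x + h" "pd2 f (x+h) \<eta> - pd2 f x \<eta> = h * pd1 (pd2 f) \<xi> \<eta>"
    by auto
  with \<eta> mvt2 show ?thesis
    by (intro that[of \<xi> \<eta>]) (auto simp: second_difference_def algebra_simps)
qed

lemma tendsto_at_right_of_values_in_box: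
  fixes g :: "real \<Rightarrow> real \<Rightarrow> real" and q :: "real \<Rightarrow> real"
  assumes cont: "isCont (\<lambda>(a, b). g a b) (x, y)"
    and box: "\<And>h. h > 0 \<Longrightarrow> \<exists>\<xi> \<eta>. x < \<xi> \<and> \<xi> < x + h \<and> y < \<eta> \<and> \<eta> < y + h \<and> q h = g \<xi> \<eta>"
  shows "(q \<longlongrightarrow> g x y) (at_right 0)"
proof (rule tendstoI)
  fix e :: real assume "e > 0"
  with cont obtain d where d: "d > 0"
    and near: "\<And>p. dist p (x, y) < d \<Longrightarrow> dist ((\<lambda>(a, b). g a b) p) (g x y) < e"
    unfolding continuous_at_eps_delta by fastforce
  have close: "dist (q h) (g x y) < e" if "h \<in> {0<..<d/2}" for h
  proof -
    from box[of h] that obtain \<xi> \<eta> where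
      \<xi>\<eta>: "x < \<xi>" "\<xi> < x + h" "y < \<eta>" "\<eta> < y + h" "q h = g \<xi> \<eta>" by auto
    have "dist (\<xi>, \<eta>) (x, y) \<le> dist \<xi> x + dist \<eta> y"
      unfolding dist_Pair_Pair by (simp add: sqrt_sum_squares_le_sum)
    also have "\<dots> < d" using \<xi>\<eta> that by (simp add: dist_real_def)
    finally show ?thesis using near \<xi>\<eta>(5) by fastforce
  qed
  then show "\<forall>\<^sub>F h in at_right 0. dist (q h) (g x y) < e"
    using d by (intro eventually_mono[OF eventually_at_right_real[of 0 "d/2"] close]) simp_all
qed

text \<open>Schwarz's theorem: by the mean value theorem the second difference quotient equals
  either mixed partial at some point of the box \<open>(x, x + h) \<times> (y, y + h)\<close>.\<close>

lemma smooth_on_quadrant_pd21_eq_pd12: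
  assumes sm: "smooth_on_quadrant f" and x: "x > 0" and y: "y > 0"
  shows "pd2 (pd1 f) x y = pd1 (pd2 f) x y"
proof (rule tendsto_unique[OF trivial_limit_at_right_real])
  show "((\<lambda>h. second_difference f x y h / (h * h)) \<longlongrightarrow> pd2 (pd1 f) x y) (at_right 0)"
  proof (rule tendsto_at_right_of_values_in_box[where g = "pd2 (pd1 f)"])
    show "isCont (\<lambda>(a, b). pd2 (pd1 f) a b) (x, y)"
      using smooth_on_quadrant_isCont[OF sm x y, of "[True, False]"] by simp
    show "\<exists>\<xi> \<eta>. x < \<xi> \<and> \<xi> < x + h \<and> y < \<eta> \<and> \<eta> < y + h \<and>
            second_difference f x y h / (h * h) = pd2 (pd1 f) \<xi> \<eta>" if "h > 0" for h
      by (rule second_difference_eq_pd21[OF sm x y that]) (use that in auto)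
  qed
  show "((\<lambda>h. second_difference f x y h / (h * h)) \<longlongrightarrow> pd1 (pd2 f) x y) (at_right 0)"
  proof (rule tendsto_at_right_of_values_in_box[where g = "pd1 (pd2 f)"])
    show "isCont (\<lambda>(a, b). pd1 (pd2 f) a b) (x, y)"
      using smooth_on_quadrant_isCont[OF sm x y, of "[False, True]"] by simp
    show "\<exists>\<xi> \<eta>. x < \<xi> \<and> \<xi> < x + h \<and> y < \<eta> \<and> \<eta> < y + h \<and>
            second_difference f x y h / (h * h) = pd1 (pd2 f) \<xi> \<eta>" if "h > 0" for h
      by (rule second_difference_eq_pd12[OF sm x y that]) (use that in auto)
  qed
qed

lemma pd1_eqI: "((\<lambda>t. g t b) has_real_derivative D) (at a) \<Longrightarrow> pd1 g a b = D"
  by (simp add: pd1_def DERIV_imp_deriv)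

lemma pd2_eqI: "((\<lambda>t. g a t) has_real_derivative D) (at b) \<Longrightarrow> pd2 g a b = D"
  by (simp add: pd2_def DERIV_imp_deriv)

lemma divergence_form_generator:
  fixes f \<pi> S11 S12 S22 :: "real \<Rightarrow> real \<Rightarrow> real"
  assumes sm: "smooth_on_quadrant f" and x1: "x1 > 0" and x2: "x2 > 0" and "\<pi> x1 x2 \<noteq> 0"
    and d\<pi>1: "((\<lambda>t. \<pi> t x2) has_real_derivative \<pi>1) (at x1)"
    and d\<pi>2: "((\<lambda>t. \<pi> x1 t) has_real_derivative \<pi>2) (at x2)"
    and dS11: "((\<lambda>t. S11 t x2) has_real_derivative s11) (at x1)"
    and dS12_1: "((\<lambda>t. S12 t x2) has_real_derivative s12_1) (at x1)"
    and dS12_2: "((\<lambda>t. S12 x1 t) has_real_derivative s12_2) (at x2)"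
    and dS22: "((\<lambda>t. S22 x1 t) has_real_derivative s22) (at x2)"
    and drift1: "2 * \<pi> x1 x2 * a1 = \<pi>1 * S11 x1 x2 + \<pi> x1 x2 * s11 + \<pi>2 * S12 x1 x2 + \<pi> x1 x2 * s12_2"
    and drift2: "2 * \<pi> x1 x2 * a2 = \<pi>1 * S12 x1 x2 + \<pi> x1 x2 * s12_1 + \<pi>2 * S22 x1 x2 + \<pi> x1 x2 * s22"
  shows "a1 * pd1 f x1 x2 + a2 * pd2 f x1 x2
           + 1/2 * (S11 x1 x2 * pd1 (pd1 f) x1 x2 + 2 * S12 x1 x2 * pd2 (pd1 f) x1 x2
                    + S22 x1 x2 * pd2 (pd2 f) x1 x2)
         = (pd1 (\<lambda>y1 y2. \<pi> y1 y2 * (S11 y1 y2 * pd1 f y1 y2 + S12 y1 y2 * pd2 f y1 y2)) x1 x2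
            + pd2 (\<lambda>y1 y2. \<pi> y1 y2 * (S12 y1 y2 * pd1 f y1 y2 + S22 y1 y2 * pd2 f y1 y2)) x1 x2)
           / (2 * \<pi> x1 x2)"
proof -
  have d1f: "((\<lambda>t. pd1 f t x2) has_real_derivative pd1 (pd1 f) x1 x2) (at x1)"
    and d1g: "((\<lambda>t. pd2 f t x2) has_real_derivative pd1 (pd2 f) x1 x2) (at x1)"
    and d2f: "((\<lambda>t. pd1 f x1 t) has_real_derivative pd2 (pd1 f) x1 x2) (at x2)"
    and d2g: "((\<lambda>t. pd2 f x1 t) has_real_derivative pd2 (pd2 f) x1 x2) (at x2)"
    using smooth_on_quadrant_has_pd1[OF sm x1 x2, of "[False]"]
      smooth_on_quadrant_has_pd1[OF sm x1 x2, of "[True]"]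
      smooth_on_quadrant_has_pd2[OF sm x1 x2, of "[False]"]
      smooth_on_quadrant_has_pd2[OF sm x1 x2, of "[True]"]
    by simp_all
  have flux1: "pd1 (\<lambda>y1 y2. \<pi> y1 y2 * (S11 y1 y2 * pd1 f y1 y2 + S12 y1 y2 * pd2 f y1 y2)) x1 x2
      = \<pi>1 * (S11 x1 x2 * pd1 f x1 x2 + S12 x1 x2 * pd2 f x1 x2)
        + \<pi> x1 x2 * (s11 * pd1 f x1 x2 + S11 x1 x2 * pd1 (pd1 f) x1 x2
                      + s12_1 * pd2 f x1 x2 + S12 x1 x2 * pd1 (pd2 f) x1 x2)"
    by (rule pd1_eqI, (rule derivative_eq_intros d\<pi>1 dS11 dS12_1 d1f d1g refl)+) simp
  have flux2: "pd2 (\<lambda>y1 y2. \<pi> y1 y2 * (S12 y1 y2 * pd1 f y1 y2 + S22 y1 y2 * pd2 f y1 y2)) x1 x2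
      = \<pi>2 * (S12 x1 x2 * pd1 f x1 x2 + S22 x1 x2 * pd2 f x1 x2)
        + \<pi> x1 x2 * (s12_2 * pd1 f x1 x2 + S12 x1 x2 * pd2 (pd1 f) x1 x2
                      + s22 * pd2 f x1 x2 + S22 x1 x2 * pd2 (pd2 f) x1 x2)"
    by (rule pd2_eqI, (rule derivative_eq_intros d\<pi>2 dS12_2 dS22 d2f d2g refl)+) simp
  have "pd1 (\<lambda>y1 y2. \<pi> y1 y2 * (S11 y1 y2 * pd1 f y1 y2 + S12 y1 y2 * pd2 f y1 y2)) x1 x2
        + pd2 (\<lambda>y1 y2. \<pi> y1 y2 * (S12 y1 y2 * pd1 f y1 y2 + S22 y1 y2 * pd2 f y1 y2)) x1 x2
      = 2 * \<pi> x1 x2 * a1 * pd1 f x1 x2 + 2 * \<pi> x1 x2 * a2 * pd2 f x1 x2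
        + \<pi> x1 x2 * (S11 x1 x2 * pd1 (pd1 f) x1 x2 + 2 * S12 x1 x2 * pd2 (pd1 f) x1 x2
                      + S22 x1 x2 * pd2 (pd2 f) x1 x2)"
    unfolding flux1 flux2 drift1 drift2 smooth_on_quadrant_pd21_eq_pd12[OF sm x1 x2]
    by (simp add: algebra_simps)
  then show ?thesis
    using \<open>\<pi> x1 x2 \<noteq> 0\<close> by (simp add: field_simps)
qed

lemma gamma_density_pos: "y > 0 \<Longrightarrow> \<theta> > 0 \<Longrightarrow> \<nu> > 0 \<Longrightarrow> gamma_density \<nu> \<theta> y > 0"
  unfolding gamma_density_def by (simp add: Gamma_real_pos)

lemma gamma_density_has_real_derivative:
  assumes y: "y > 0" and "\<theta> > 0" and \<nu>: "\<nu> > 0"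
  shows "(gamma_density \<nu> \<theta> has_real_derivative gamma_density \<nu> \<theta> y * ((\<nu> - 1) / y - \<nu> / \<theta>)) (at y)"
proof -
  have "Gamma \<nu> \<noteq> 0" "\<theta> \<noteq> 0" "y \<noteq> 0"
    using Gamma_real_pos[OF \<nu>] assms by linarith+
  define c where "c = (\<nu> / \<theta>) powr \<nu> / Gamma \<nu>"
  have powr_pred: "y powr (\<nu> - 2) = y powr (\<nu> - 1) / y"
    using y by (simp add: powr_diff power2_eq_square)
  have "(gamma_density \<nu> \<theta> has_real_derivative
          c * ((\<nu> - 1) * y powr (\<nu> - 1 - 1)) * exp (- \<nu> * y / \<theta>)
          + c * y powr (\<nu> - 1) * (exp (- \<nu> * y / \<theta>) * (- \<nu> / \<theta>))) (at y)"
    unfolding gamma_density_def[abs_def] c_def[symmetric]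
    using assms by (intro derivative_eq_intros refl) auto
  then show ?thesis
    by (rule DERIV_cong)
      (use \<open>Gamma \<nu> \<noteq> 0\<close> \<open>\<theta> \<noteq> 0\<close> \<open>y \<noteq> 0\<close> in
        \<open>simp add: powr_pred gamma_density_def c_def field_simps\<close>)
qed

text \<open>The divergence-form condition for the first drift component, multiplied by an
  arbitrary factor \<open>p\<close> (the value of the density) to match \<open>divergence_form_generator\<close>;
  the second component is the same identity with the indices swapped.\<close>

lemma adc_drift_identity:
  fixes \<kappa>1 \<kappa>2 \<theta>1 \<theta>2 \<sigma>1 \<sigma>2 \<epsilon>1 \<gamma> \<nu>1 \<nu>2 y1 y2 :: real
  assumes "y1 > 0" "y2 > 0" "\<theta>1 > 0" "\<theta>2 > 0" "\<sigma>1 > 0" "\<sigma>2 > 0"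
    and "\<nu>1 = 2 * \<kappa>1 * \<theta>1 / \<sigma>1\<^sup>2" "\<nu>2 = 2 * \<kappa>2 * \<theta>2 / \<sigma>2\<^sup>2"
  shows "2 * p * (\<kappa>1 * (1 + \<epsilon>1 / \<sigma>1\<^sup>2 * y2) * (\<theta>1 - y1) + \<kappa>2 * (\<gamma> / \<sigma>2\<^sup>2) * y1 * (\<theta>2 - y2))
       = p * ((\<nu>1 - 1) / y1 - \<nu>1 / \<theta>1) * (\<sigma>1\<^sup>2 * y1 + \<epsilon>1 * y1 * y2) + p * (\<sigma>1\<^sup>2 + \<epsilon>1 * y2)
         + p * ((\<nu>2 - 1) / y2 - \<nu>2 / \<theta>2) * (\<gamma> * y1 * y2) + p * (\<gamma> * y1)"
proof -
  have "y1 \<noteq> 0" "y2 \<noteq> 0" "\<theta>1 \<noteq> 0" "\<theta>2 \<noteq> 0" "\<sigma>1\<^sup>2 \<noteq> 0" "\<sigma>2\<^sup>2 \<noteq> 0"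
    using assms(1-6) by auto
  then show ?thesis
    unfolding assms(7,8) by (simp add: field_simps) algebra
qed

theorem mainTheorem3:
  fixes \<kappa>1 \<kappa>2 \<theta>1 \<theta>2 \<sigma>1 \<sigma>2 \<epsilon>1 \<epsilon>2 \<gamma> :: real
    and f :: "real \<Rightarrow> real \<Rightarrow> real"
  assumes "\<kappa>1 > 0" "\<kappa>2 > 0" "\<theta>1 > 0" "\<theta>2 > 0" "\<sigma>1 > 0" "\<sigma>2 > 0"
    and "\<epsilon>1 \<ge> 0" "\<epsilon>2 \<ge> 0"
    and "- sqrt (\<epsilon>1 * \<epsilon>2) \<le> \<gamma>" "\<gamma> \<le> sqrt (\<epsilon>1 * \<epsilon>2)"
    and "smooth_on_quadrant f"
    and "x1 > 0" "x2 > 0"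
  shows
    "let \<beta>1 = \<epsilon>1 / \<sigma>1\<^sup>2; \<beta>2 = \<epsilon>2 / \<sigma>2\<^sup>2;
         \<alpha>1 = \<gamma> / \<sigma>1\<^sup>2; \<alpha>2 = \<gamma> / \<sigma>2\<^sup>2;
         \<nu>1 = 2 * \<kappa>1 * \<theta>1 / \<sigma>1\<^sup>2; \<nu>2 = 2 * \<kappa>2 * \<theta>2 / \<sigma>2\<^sup>2;
         A1 = (\<lambda>y1 y2. \<kappa>1 * (1 + \<beta>1 * y2) * (\<theta>1 - y1) + \<kappa>2 * \<alpha>2 * y1 * (\<theta>2 - y2));
         A2 = (\<lambda>y1 y2. \<kappa>2 * (1 + \<beta>2 * y1) * (\<theta>2 - y2) + \<kappa>1 * \<alpha>1 * y2 * (\<theta>1 - y1));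
         S11 = (\<lambda>y1 y2. \<sigma>1\<^sup>2 * y1 + \<epsilon>1 * y1 * y2);
         S12 = (\<lambda>y1 y2. \<gamma> * y1 * y2);
         S22 = (\<lambda>y1 y2. \<sigma>2\<^sup>2 * y2 + \<epsilon>2 * y1 * y2);
         \<pi> = (\<lambda>y1 y2. gamma_density \<nu>1 \<theta>1 y1 * gamma_density \<nu>2 \<theta>2 y2);
         Lf = A1 x1 x2 * pd1 f x1 x2 + A2 x1 x2 * pd2 f x1 x2
              + 1/2 * (S11 x1 x2 * pd1 (pd1 f) x1 x2 + 2 * S12 x1 x2 * pd2 (pd1 f) x1 x2
                       + S22 x1 x2 * pd2 (pd2 f) x1 x2);
         divergence =
              pd1 (\<lambda>y1 y2. \<pi> y1 y2 * (S11 y1 y2 * pd1 f y1 y2 + S12 y1 y2 * pd2 f y1 y2)) x1 x2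
            + pd2 (\<lambda>y1 y2. \<pi> y1 y2 * (S12 y1 y2 * pd1 f y1 y2 + S22 y1 y2 * pd2 f y1 y2)) x1 x2
     in Lf = divergence / (2 * \<pi> x1 x2)"
proof -
  note pos = assms(3-6) and x = assms(12,13)
  define \<nu>1 where "\<nu>1 = 2 * \<kappa>1 * \<theta>1 / \<sigma>1\<^sup>2"
  define \<nu>2 where "\<nu>2 = 2 * \<kappa>2 * \<theta>2 / \<sigma>2\<^sup>2"
  have \<nu>: "\<nu>1 > 0" "\<nu>2 > 0" using assms(1-6) by (auto simp: \<nu>1_def \<nu>2_def)
  define g1 where "g1 = gamma_density \<nu>1 \<theta>1"
  define g2 where "g2 = gamma_density \<nu>2 \<theta>2"
  have g: "g1 x1 > 0" "g2 x2 > 0"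
    using gamma_density_pos x pos \<nu> by (auto simp: g1_def g2_def)
  have dg1: "(g1 has_real_derivative g1 x1 * ((\<nu>1 - 1) / x1 - \<nu>1 / \<theta>1)) (at x1)"
    and dg2: "(g2 has_real_derivative g2 x2 * ((\<nu>2 - 1) / x2 - \<nu>2 / \<theta>2)) (at x2)"
    unfolding g1_def g2_def using gamma_density_has_real_derivative x pos \<nu> by auto
  show ?thesis
    unfolding Let_def \<nu>1_def[symmetric] \<nu>2_def[symmetric] g1_def[symmetric] g2_def[symmetric]
  proof (rule divergence_form_generator[OF assms(11) x])
    show "g1 x1 * g2 x2 \<noteq> 0" using g by simp
    show "((\<lambda>t. g1 t * g2 x2) has_real_derivative g1 x1 * g2 x2 * ((\<nu>1 - 1) / x1 - \<nu>1 / \<theta>1)) (at x1)"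
      by (rule derivative_eq_intros dg1 refl)+ simp
    show "((\<lambda>t. g1 x1 * g2 t) has_real_derivative g1 x1 * g2 x2 * ((\<nu>2 - 1) / x2 - \<nu>2 / \<theta>2)) (at x2)"
      by (rule derivative_eq_intros dg2 refl)+ simp
    show "((\<lambda>t. \<sigma>1\<^sup>2 * t + \<epsilon>1 * t * x2) has_real_derivative \<sigma>1\<^sup>2 + \<epsilon>1 * x2) (at x1)"
      and "((\<lambda>t. \<gamma> * t * x2) has_real_derivative \<gamma> * x2) (at x1)"
      and "((*) (\<gamma> * x1) has_real_derivative \<gamma> * x1) (at x2)"
      and "((\<lambda>t. \<sigma>2\<^sup>2 * t + \<epsilon>2 * x1 * t) has_real_derivative \<sigma>2\<^sup>2 + \<epsilon>2 * x1) (at x2)"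
      by (auto intro!: derivative_eq_intros)
  qed (use adc_drift_identity[OF x pos \<nu>1_def \<nu>2_def, of "g1 x1 * g2 x2" \<epsilon>1 \<gamma>]
         adc_drift_identity[OF x(2,1) pos(2,1,4,3) \<nu>2_def \<nu>1_def, of "g1 x1 * g2 x2" \<epsilon>2 \<gamma>]
       in \<open>simp_all add: ac_simps\<close>)
qed

end
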